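(* Let $n\ne0,-1$, let $r$ be a constant and $\xi(x)$ a nonvanishing smooth function, and set $p=4(1+\frac1n)^2r^2$. Then for arbitrary constants $c_1,c_2$, the function $u(t,x)=\varphi(\omega)|\xi|^{\frac1{2n+2}}\exp\big(\frac rn\int\frac{dx}{\xi}\big)$, $\omega=t-\int\frac{dx}{\xi}$, where $\varphi$ is defined implicitly by $$\int\frac{n(\varphi^n-1)}{2r\varphi^{n+1}+c_1}\,d\varphi=\omega+c_2,$$ is a solution of $$|\xi|^{-\frac{3n+4}{2n+2}}\exp\Big(r\int\frac{dx}{\xi}\Big)u_{tt}-(u^nu_x)_x-\frac{\xi_x^2-2\xi\xi_{xx}-p}{4(n+1)\xi^2}u^{n+1}=0.$$
   Context: Here $\int dx/\xi$ denotes a fixed antiderivative of $1/\xi$. *)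

theory Defs
  imports "HOL-Analysis.Analysis"
begin

end

theory Submission
  imports Defs
begin

text \<open>Write \<open>u = \<phi>(\<omega>) E(x)\<close> with \<open>E = |\<xi>|^(1/(2n+2)) exp ((r/n) \<integral>dx/\<xi>)\<close>.
Differentiating the implicit relation gives the first-order equation
\<open>\<phi>' = (2r\<phi>^(n+1) + c\<^sub>1) / (n(\<phi>^n - 1))\<close>, and differentiating it once more the reduced equation
\<open>(1 - \<phi>^n) \<phi>'' - n \<phi>^(n-1) \<phi>'\<^sup>2 + 2r(n+1)/n \<phi>^n \<phi>' = 0\<close>.
Substituting the ansatz, the left-hand side of the PDE is \<open>E^(n+1)/\<xi>\<^sup>2\<close> times this reduced
expression: the exponent \<open>1/(2n+2)\<close> makes the terms in \<open>\<xi>'\<close> that multiply \<open>\<phi>^n \<phi>'\<close> cancel,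
and the value of \<open>p\<close> makes the coefficient of \<open>\<phi>^(n+1)\<close> vanish identically.\<close>

lemma implicit_has_real_derivative:
  fixes \<phi> G :: "real \<Rightarrow> real"
  assumes J: "open J" "w \<in> J" and \<phi>: "\<phi> differentiable (at w)"
    and G: "(G has_real_derivative G') (at (\<phi> w))"
    and implicit: "\<forall>v\<in>J. G (\<phi> v) = v + c"
  shows "G' \<noteq> 0" "(\<phi> has_real_derivative inverse G') (at w)"
proof -
  have \<phi>': "(\<phi> has_real_derivative deriv \<phi> w) (at w)"
    using \<phi> DERIV_deriv_iff_real_differentiable by blast
  have "((\<lambda>v. G (\<phi> v)) has_real_derivative G' * deriv \<phi> w) (at w)"
    using DERIV_chain2[OF G \<phi>'] .
  moreover have "((\<lambda>v. G (\<phi> v)) has_real_derivative 1) (at w)"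
    by (rule has_field_derivative_transform_within_open[OF _ J, of "\<lambda>v. v + c"])
       (use implicit in \<open>auto intro!: derivative_eq_intros\<close>)
  ultimately have inv: "G' * deriv \<phi> w = 1"
    by (rule DERIV_unique)
  then show G': "G' \<noteq> 0" by auto
  from inv G' have "deriv \<phi> w = inverse G'"
    by (simp add: field_simps)
  with \<phi>' show "(\<phi> has_real_derivative inverse G') (at w)" by simp
qed

text \<open>The reciprocal of the integrand in the implicit definition of \<open>\<phi>\<close>, so that \<open>\<phi>' = profile_slope n r c1 \<phi>\<close>.\<close>

definition profile_slope :: "real \<Rightarrow> real \<Rightarrow> real \<Rightarrow> real \<Rightarrow> real" where
  "profile_slope n r c1 y = (2 * r * y powr (n + 1) + c1) / (n * (y powr n - 1))"

lemma profile_slope_reduced_ode: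
  fixes n r c1 y :: real
  assumes n: "n \<noteq> 0" and y: "y > 0" "y powr n \<noteq> 1"
  defines "s \<equiv> profile_slope n r c1 y"
  obtains D where "(profile_slope n r c1 has_real_derivative D) (at y)"
    and "(1 - y powr n) * (D * s) + 2 * r * (n + 1) / n * y powr n * s - n * y powr n / y * s\<^sup>2 = 0"
proof -
  define D where "D = (2 * r * (n + 1) * y powr n * (n * (y powr n - 1))
                       - (2 * r * y powr (n + 1) + c1) * (n * n * y powr n / y)) / (n * (y powr n - 1))\<^sup>2"
  have "(profile_slope n r c1 has_real_derivative D) (at y)"
    unfolding profile_slope_def[abs_def] D_def using n y
    by (auto intro!: derivative_eq_intros simp: powr_diff power2_eq_square field_simps)
  moreover have "(1 - y powr n) * (D * s) + 2 * r * (n + 1) / n * y powr n * s - n * y powr n / y * s\<^sup>2 = 0"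
  proof -
    define d where "d = y powr n - 1"
    have "d \<noteq> 0" "y powr n = d + 1" "y powr (n + 1) = y * (d + 1)"
      using y by (simp_all add: d_def powr_add)
    then show ?thesis
      using n y unfolding s_def profile_slope_def D_def
      by (simp add: field_simps power2_eq_square)
  qed
  ultimately show thesis
    using that by blast
qed

lemma autonomous_shift_second_derivative:
  fixes \<phi> f :: "real \<Rightarrow> real"
  assumes J: "open J" "t - c \<in> J"
    and ode: "\<forall>w\<in>J. (\<phi> has_real_derivative f (\<phi> w)) (at w)"
    and f: "(f has_real_derivative D) (at (\<phi> (t - c)))"
  shows "((\<lambda>s. \<phi> (s - c) * K) has_real_derivative f (\<phi> (t - c)) * K) (at t)"
    and "((\<lambda>s. deriv (\<lambda>s'. \<phi> (s' - c) * K) s) has_real_derivative D * f (\<phi> (t - c)) * K) (at t)"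
proof -
  define T where "T = (\<lambda>s. s - c) -` J"
  have T: "open T" "t \<in> T"
    using J unfolding T_def by (auto intro!: open_vimage continuous_intros)
  have shifted: "((\<lambda>s. \<phi> (s - c)) has_real_derivative f (\<phi> (s - c))) (at s)" if "s \<in> T" for s
    using DERIV_chain2[OF ode[rule_format] DERIV_diff[OF DERIV_ident DERIV_const]] that
    unfolding T_def by simp
  have first: "((\<lambda>s. \<phi> (s - c) * K) has_real_derivative f (\<phi> (s - c)) * K) (at s)" if "s \<in> T" for s
    using DERIV_cmult_right[OF shifted[OF that]] .
  then show "((\<lambda>s. \<phi> (s - c) * K) has_real_derivative f (\<phi> (t - c)) * K) (at t)"
    using T by blast
  have "((\<lambda>s. f (\<phi> (s - c)) * K) has_real_derivative D * f (\<phi> (t - c)) * K) (at t)"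
    using DERIV_cmult_right[OF DERIV_chain2[OF f shifted[OF \<open>t \<in> T\<close>]]] .
  then show "((\<lambda>s. deriv (\<lambda>s'. \<phi> (s' - c) * K) s) has_real_derivative D * f (\<phi> (t - c)) * K) (at t)"
    by (rule has_field_derivative_transform_within_open[OF _ T]) (use first DERIV_imp_deriv in metis)
qed

lemma exp_product_flux_has_derivative:
  fixes u P P' \<Lambda> L :: "real \<Rightarrow> real"
  assumes Y: "open Y" "x \<in> Y"
    and u: "\<forall>y\<in>Y. u y = P y * exp (\<Lambda> y)"
    and P_pos: "\<forall>y\<in>Y. P y > 0"
    and P: "\<forall>y\<in>Y. (P has_real_derivative P' y) (at y)"
    and \<Lambda>: "\<forall>y\<in>Y. (\<Lambda> has_real_derivative L y) (at y)"
    and P': "(P' has_real_derivative P'') (at x)"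
    and L: "(L has_real_derivative L') (at x)"
  shows "(u has_real_derivative exp (\<Lambda> x) * (P' x + P x * L x)) (at x)"
    and "((\<lambda>y. u y powr n * deriv u y) has_real_derivative
          exp ((n + 1) * \<Lambda> x) * (n * (P x powr n / P x) * P' x * (P' x + P x * L x)
            + (n + 1) * L x * P x powr n * (P' x + P x * L x)
            + P x powr n * (P'' + P' x * L x + P x * L'))) (at x)"
proof -
  have du: "(u has_real_derivative exp (\<Lambda> y) * (P' y + P y * L y)) (at y)" if "y \<in> Y" for y
  proof (rule has_field_derivative_transform_within_open[OF _ Y(1) that])
    show "((\<lambda>y. P y * exp (\<Lambda> y)) has_real_derivative exp (\<Lambda> y) * (P' y + P y * L y)) (at y)"
      using P \<Lambda> that by (auto intro!: derivative_eq_intros simp: algebra_simps)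
  qed (use u in simp)
  then show "(u has_real_derivative exp (\<Lambda> x) * (P' x + P x * L x)) (at x)"
    using Y by blast
  have flux: "u y powr n * deriv u y = P y powr n * exp ((n + 1) * \<Lambda> y) * (P' y + P y * L y)"
    if "y \<in> Y" for y
    using that u P_pos DERIV_imp_deriv[OF du[OF that]]
    by (simp add: powr_def ln_mult exp_add[symmetric] algebra_simps)
  have "((\<lambda>y. P y powr n * exp ((n + 1) * \<Lambda> y) * (P' y + P y * L y)) has_real_derivative
          exp ((n + 1) * \<Lambda> x) * (n * (P x powr n / P x) * P' x * (P' x + P x * L x)
            + (n + 1) * L x * P x powr n * (P' x + P x * L x)
            + P x powr n * (P'' + P' x * L x + P x * L'))) (at x)"
  proof -
    have "P x > 0" using P_pos Y by blast
    then show ?thesis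
      using Y P P_pos \<Lambda> P' L by (auto intro!: derivative_eq_intros simp: powr_diff field_simps)
  qed
  then show "((\<lambda>y. u y powr n * deriv u y) has_real_derivative
          exp ((n + 1) * \<Lambda> x) * (n * (P x powr n / P x) * P' x * (P' x + P x * L x)
            + (n + 1) * L x * P x powr n * (P' x + P x * L x)
            + P x powr n * (P'' + P' x * L x + P x * L'))) (at x)"
    by (rule has_field_derivative_transform_within_open[OF _ Y]) (simp add: flux)
qed

text \<open>Here \<open>\<phi>\<close>, \<open>s = \<phi>'\<close> and \<open>D s = \<phi>''\<close> are the profile and its derivatives at \<open>\<omega>\<close>,
\<open>pn = \<phi>^n\<close>, \<open>P'\<close> and \<open>P''\<close> the \<open>x\<close>-derivatives of \<open>\<phi>(t - F x)\<close>, \<open>L\<close> and \<open>L'\<close> those of \<open>log E\<close>,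
and \<open>E\<^sub>n = E^n\<close>; \<open>\<xi>0\<close>, \<open>\<xi>1\<close>, \<open>\<xi>2\<close> are \<open>\<xi>\<close> and its first two derivatives at \<open>x\<close>.\<close>

lemma separated_residual_factorization:
  fixes n r p \<phi> s D \<xi>0 \<xi>1 \<xi>2 pn E\<^sub>n E :: real
  assumes n: "n \<noteq> 0" "n \<noteq> -1" and \<xi>0: "\<xi>0 \<noteq> 0" and \<phi>: "\<phi> \<noteq> 0"
    and p: "p = 4 * (1 + 1 / n)\<^sup>2 * r\<^sup>2"
  defines "a \<equiv> 1 / (2 * n + 2)"
  defines "L \<equiv> (a * \<xi>1 + r / n) / \<xi>0"
    and "L' \<equiv> (a * (\<xi>2 * \<xi>0 - \<xi>1\<^sup>2) - r / n * \<xi>1) / \<xi>0\<^sup>2"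
    and "P' \<equiv> - (s / \<xi>0)"
    and "P'' \<equiv> (D * s + s * \<xi>1) / \<xi>0\<^sup>2"
  shows "E\<^sub>n / \<xi>0\<^sup>2 * (D * s * E)
         - E\<^sub>n * E * (n * (pn / \<phi>) * P' * (P' + \<phi> * L) + (n + 1) * L * pn * (P' + \<phi> * L)
            + pn * (P'' + P' * L + \<phi> * L'))
         - (\<xi>1\<^sup>2 - 2 * \<xi>0 * \<xi>2 - p) / (4 * (n + 1) * \<xi>0\<^sup>2) * (pn * \<phi> * (E\<^sub>n * E))
       = E\<^sub>n * E * ((1 - pn) * (D * s) + 2 * r * (n + 1) / n * pn * s - n * pn / \<phi> * s\<^sup>2) / \<xi>0\<^sup>2"
proof -
  define b where "b = n + 1"
  have b: "b \<noteq> 0" using n by (simp add: b_def)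
  have ab: "a = 1 / (2 * b)" "p = 4 * (b / n)\<^sup>2 * r\<^sup>2"
    using p n by (simp_all add: a_def b_def field_simps)
  show ?thesis
    unfolding L_def L'_def P'_def P''_def ab b_def[symmetric]
    using n b \<xi>0 \<phi> by (simp add: field_simps power2_eq_square) (simp add: b_def algebra_simps)
qed

text \<open>This holds at \<open>x = 0\<close> too, because \<open>ln 0 = 0\<close>.\<close>

lemma ln_abs_eq_half_ln_square: "ln \<bar>x\<bar> = ln (x\<^sup>2) / 2" for x :: real
  using ln_realpow[of "\<bar>x\<bar>" 2] by (cases "x = 0") simp_all

lemma ln_abs_has_real_derivative:
  fixes f :: "real \<Rightarrow> real"
  assumes f: "(f has_real_derivative f') (at y)" and nz: "f y \<noteq> 0"
  shows "((\<lambda>z. ln \<bar>f z\<bar>) has_real_derivative f' / f y) (at y)"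
proof -
  have "(f y)\<^sup>2 > 0" using nz by simp
  then have "((\<lambda>z. ln ((f z)\<^sup>2) / 2) has_real_derivative f' / f y) (at y)"
    using f nz by (auto intro!: derivative_eq_intros simp: power2_eq_square)
  then show ?thesis by (simp add: ln_abs_eq_half_ln_square)
qed

locale separated_ansatz =
  fixes n r c1 c2 :: real
    and \<xi> \<xi>' \<xi>'' F G \<phi> :: "real \<Rightarrow> real"
    and X J :: "real set"
    and u :: "real \<Rightarrow> real \<Rightarrow> real"
  assumes n0: "n \<noteq> 0" and n1: "n \<noteq> -1"
    and X_open: "open X"
    and xi_nz: "\<forall>x\<in>X. \<xi> x \<noteq> 0"
    and xi_d1: "\<forall>x\<in>X. (\<xi> has_real_derivative \<xi>' x) (at x)"
    and xi_d2: "\<forall>x\<in>X. (\<xi>' has_real_derivative \<xi>'' x) (at x)"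
    and F_antider: "\<forall>x\<in>X. (F has_real_derivative 1 / \<xi> x) (at x)"
    and J_open: "open J"
    and phi_pos: "\<forall>w\<in>J. \<phi> w > 0"
    and phi_diff: "\<forall>w\<in>J. \<phi> differentiable (at w)"
    and denom_nz: "\<forall>w\<in>J. 2 * r * \<phi> w powr (n + 1) + c1 \<noteq> 0"
    and G_antider: "\<forall>w\<in>J. (G has_real_derivative
                        n * (\<phi> w powr n - 1) / (2 * r * \<phi> w powr (n + 1) + c1)) (at (\<phi> w))"
    and phi_implicit: "\<forall>w\<in>J. G (\<phi> w) = w + c2"
    and u_def: "u = (\<lambda>t x. \<phi> (t - F x) * \<bar>\<xi> x\<bar> powr (1 / (2 * n + 2)) * exp (r / n * F x))"
begin

lemma profile_has_derivative:
  assumes "w \<in> J"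
  shows "\<phi> w powr n \<noteq> 1" "(\<phi> has_real_derivative profile_slope n r c1 (\<phi> w)) (at w)"
proof -
  note implicit = implicit_has_real_derivative[OF J_open assms,
      OF phi_diff[rule_format] G_antider[rule_format] phi_implicit, OF assms assms]
  from implicit(1) show "\<phi> w powr n \<noteq> 1" by auto
  from implicit(2) show "(\<phi> has_real_derivative profile_slope n r c1 (\<phi> w)) (at w)"
    by (simp add: profile_slope_def inverse_divide)
qed

lemma profile_ode: "\<forall>w\<in>J. (\<phi> has_real_derivative profile_slope n r c1 (\<phi> w)) (at w)"
  using profile_has_derivative(2) by blast

definition weight :: "real \<Rightarrow> real" where
  "weight y = ln \<bar>\<xi> y\<bar> / (2 * n + 2) + r / n * F y"

lemma u_separated: "y \<in> X \<Longrightarrow> u s y = \<phi> (s - F y) * exp (weight y)"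
  using xi_nz by (simp add: u_def weight_def powr_def exp_add)

lemma u_powr:
  assumes "y \<in> X" "t - F y \<in> J"
  shows "u t y powr a = \<phi> (t - F y) powr a * exp (a * weight y)"
  using assms u_separated phi_pos by (simp add: powr_mult exp_powr_real mult.commute)

lemma weight_has_derivative:
  assumes "y \<in> X"
  shows "(weight has_real_derivative (1 / (2 * n + 2) * \<xi>' y + r / n) / \<xi> y) (at y)"
proof -
  have "(weight has_real_derivative \<xi>' y / \<xi> y / (2 * n + 2) + r / n * (1 / \<xi> y)) (at y)"
    unfolding weight_def[abs_def]
    by (intro DERIV_add DERIV_cdivide DERIV_cmult ln_abs_has_real_derivative)
       (use assms xi_nz xi_d1 F_antider in auto)
  then show ?thesis
    by (simp add: add_divide_distrib mult.commute)
qed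

lemma weight_coefficient:
  assumes x: "x \<in> X"
  shows "\<bar>\<xi> x\<bar> powr (- (3 * n + 4) / (2 * n + 2)) * exp (r * F x) = exp (n * weight x) / (\<xi> x)\<^sup>2"
proof -
  have \<xi>: "\<xi> x \<noteq> 0" "2 * n + 2 \<noteq> 0"
    using xi_nz x n1 by auto
  have c: "- (3 * n + 4) / (2 * n + 2) = n / (2 * n + 2) - 2"
    using \<xi>(2) by (simp add: field_simps)
  have w: "n * weight x = n / (2 * n + 2) * ln \<bar>\<xi> x\<bar> + r * F x"
    using n0 by (simp add: weight_def distrib_left)
  have "\<bar>\<xi> x\<bar> powr (- (3 * n + 4) / (2 * n + 2)) * exp (r * F x)
        = exp (- (3 * n + 4) / (2 * n + 2) * ln \<bar>\<xi> x\<bar> + r * F x)"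
    using \<xi> by (simp add: powr_def exp_add)
  also have "\<dots> = exp (n * weight x - 2 * ln \<bar>\<xi> x\<bar>)"
    unfolding c w by (simp add: algebra_simps)
  also have "\<dots> = exp (n * weight x) / (\<xi> x)\<^sup>2"
    using \<xi> by (simp add: exp_diff exp_double)
  finally show ?thesis .
qed

lemma time_derivatives:
  assumes x: "x \<in> X" and tx: "t - F x \<in> J"
    and D: "(profile_slope n r c1 has_real_derivative D) (at (\<phi> (t - F x)))"
  shows "((\<lambda>s. u s x) has_real_derivative profile_slope n r c1 (\<phi> (t - F x)) * exp (weight x)) (at t)"
    and "((\<lambda>s. deriv (\<lambda>s'. u s' x) s) has_real_derivative
          D * profile_slope n r c1 (\<phi> (t - F x)) * exp (weight x)) (at t)"
proof -
  have u: "(\<lambda>s. u s x) = (\<lambda>s. \<phi> (s - F x) * exp (weight x))"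
    using u_separated[OF x] by auto
  show "((\<lambda>s. u s x) has_real_derivative profile_slope n r c1 (\<phi> (t - F x)) * exp (weight x)) (at t)"
    "((\<lambda>s. deriv (\<lambda>s'. u s' x) s) has_real_derivative
          D * profile_slope n r c1 (\<phi> (t - F x)) * exp (weight x)) (at t)"
    unfolding u by (rule autonomous_shift_second_derivative[OF J_open tx profile_ode D])+
qed

lemma space_derivatives:
  assumes x: "x \<in> X" and tx: "t - F x \<in> J"
    and D: "(profile_slope n r c1 has_real_derivative D) (at (\<phi> (t - F x)))"
  defines "y0 \<equiv> \<phi> (t - F x)"
  defines "s \<equiv> profile_slope n r c1 y0"
  defines "L \<equiv> (1 / (2 * n + 2) * \<xi>' x + r / n) / \<xi> x"
    and "L' \<equiv> (1 / (2 * n + 2) * (\<xi>'' x * \<xi> x - (\<xi>' x)\<^sup>2) - r / n * \<xi>' x) / (\<xi> x)\<^sup>2"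
    and "P' \<equiv> - (s / \<xi> x)"
    and "P'' \<equiv> (D * s + s * \<xi>' x) / (\<xi> x)\<^sup>2"
  shows "(\<lambda>y. u t y) differentiable (at x)"
    and "((\<lambda>y. u t y powr n * deriv (\<lambda>z. u t z) y) has_real_derivative
          exp ((n + 1) * weight x) * (n * (y0 powr n / y0) * P' * (P' + y0 * L)
            + (n + 1) * L * y0 powr n * (P' + y0 * L) + y0 powr n * (P'' + P' * L + y0 * L'))) (at x)"
proof -
  define Y where "Y = X \<inter> (\<lambda>y. t - F y) -` J"
  have "continuous_on X (\<lambda>y. t - F y)"
    using F_antider DERIV_isCont by (auto intro!: continuous_at_imp_continuous_on continuous_intros)
  then have Y: "open Y" "x \<in> Y"
    using continuous_open_preimage[OF _ X_open J_open] x tx unfolding Y_def by auto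
  define P where "P y = \<phi> (t - F y)" for y
  have P: "(P has_real_derivative - (profile_slope n r c1 (P y) / \<xi> y)) (at y)" if "y \<in> Y" for y
    using DERIV_chain2[OF profile_has_derivative(2) DERIV_diff[OF DERIV_const F_antider[rule_format]]] that
    unfolding P_def Y_def by simp
  have P': "((\<lambda>y. - (profile_slope n r c1 (P y) / \<xi> y)) has_real_derivative P'') (at x)"
    unfolding P_def
    by (rule DERIV_cong[OF DERIV_minus[OF DERIV_divide[OF DERIV_chain2[OF D P[OF Y(2), unfolded P_def]]
          xi_d1[rule_format, OF x]]]])
       (use xi_nz x in \<open>auto simp: P''_def s_def y0_def power2_eq_square field_simps\<close>)
  have L': "((\<lambda>y. (1 / (2 * n + 2) * \<xi>' y + r / n) / \<xi> y) has_real_derivative L') (at x)"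
    by (rule DERIV_cong[OF DERIV_divide[OF DERIV_add[OF DERIV_cmult[OF xi_d2[rule_format, OF x]] DERIV_const]
          xi_d1[rule_format, OF x]]])
       (use xi_nz x in \<open>simp_all add: L'_def power2_eq_square algebra_simps diff_divide_distrib\<close>)
  have u: "\<forall>y\<in>Y. u t y = P y * exp (weight y)"
    using u_separated by (simp add: Y_def P_def)
  have pos: "\<forall>y\<in>Y. P y > 0"
    using phi_pos by (simp add: Y_def P_def)
  have weight: "\<forall>y\<in>Y. (weight has_real_derivative (1 / (2 * n + 2) * \<xi>' y + r / n) / \<xi> y) (at y)"
    using weight_has_derivative by (simp add: Y_def)
  have Px: "P x = y0" by (simp add: P_def y0_def)
  note flux = exp_product_flux_has_derivative[OF Y u pos _ weight P' L', unfolded Px,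
      folded s_def P'_def L_def]
  show "(\<lambda>y. u t y) differentiable (at x)"
    using flux(1) P by (auto simp: real_differentiable_def)
  show "((\<lambda>y. u t y powr n * deriv (\<lambda>z. u t z) y) has_real_derivative
          exp ((n + 1) * weight x) * (n * (y0 powr n / y0) * P' * (P' + y0 * L)
            + (n + 1) * L * y0 powr n * (P' + y0 * L) + y0 powr n * (P'' + P' * L + y0 * L'))) (at x)"
    using flux(2) P by blast
qed

lemma separated_residual:
  assumes x: "x \<in> X" and tx: "t - F x \<in> J" and p: "p = 4 * (1 + 1 / n)\<^sup>2 * r\<^sup>2"
  shows "(\<lambda>s. u s x) differentiable (at t) \<and>
         (\<lambda>s. deriv (\<lambda>s'. u s' x) s) differentiable (at t) \<and>
         (\<lambda>y. u t y) differentiable (at x) \<and>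
         (\<lambda>y. u t y powr n * deriv (\<lambda>z. u t z) y) differentiable (at x) \<and>
         \<bar>\<xi> x\<bar> powr (- (3 * n + 4) / (2 * n + 2)) * exp (r * F x)
            * deriv (\<lambda>s. deriv (\<lambda>s'. u s' x) s) t
         - deriv (\<lambda>y. u t y powr n * deriv (\<lambda>z. u t z) y) x
         - ((\<xi>' x)\<^sup>2 - 2 * \<xi> x * \<xi>'' x - p) / (4 * (n + 1) * (\<xi> x)\<^sup>2) * u t x powr (n + 1) = 0"
proof -
  define y0 where "y0 = \<phi> (t - F x)"
  have y0: "y0 > 0" "y0 powr n \<noteq> 1"
    using phi_pos profile_has_derivative(1) tx by (auto simp: y0_def)
  obtain D where D: "(profile_slope n r c1 has_real_derivative D) (at y0)"
    and ode: "(1 - y0 powr n) * (D * profile_slope n r c1 y0) + 2 * r * (n + 1) / n * y0 powr n * profile_slope n r c1 y0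
              - n * y0 powr n / y0 * (profile_slope n r c1 y0)\<^sup>2 = 0"
    using profile_slope_reduced_ode[OF n0 y0] .
  note time = time_derivatives[OF x tx D[unfolded y0_def]]
    and space = space_derivatives[OF x tx D[unfolded y0_def]]
  have \<xi>: "\<xi> x \<noteq> 0"
    using xi_nz x by auto
  have exp_weight: "exp ((n + 1) * weight x) = exp (n * weight x) * exp (weight x)"
    by (simp add: distrib_right exp_add)
  have u_powr_succ: "u t x powr (n + 1) = y0 powr n * y0 * exp ((n + 1) * weight x)"
    unfolding u_powr[OF x tx] y0_def[symmetric] using y0 by (simp add: powr_add)
  show ?thesis
  proof (intro conjI)
    show "(\<lambda>s. u s x) differentiable (at t)" "(\<lambda>s. deriv (\<lambda>s'. u s' x) s) differentiable (at t)"
      using time by (auto simp: real_differentiable_def)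
    show "(\<lambda>y. u t y) differentiable (at x)" "(\<lambda>y. u t y powr n * deriv (\<lambda>z. u t z) y) differentiable (at x)"
      using space by (auto simp: real_differentiable_def)
    show "\<bar>\<xi> x\<bar> powr (- (3 * n + 4) / (2 * n + 2)) * exp (r * F x)
            * deriv (\<lambda>s. deriv (\<lambda>s'. u s' x) s) t
          - deriv (\<lambda>y. u t y powr n * deriv (\<lambda>z. u t z) y) x
          - ((\<xi>' x)\<^sup>2 - 2 * \<xi> x * \<xi>'' x - p) / (4 * (n + 1) * (\<xi> x)\<^sup>2) * u t x powr (n + 1) = 0"
      unfolding weight_coefficient[OF x] u_powr_succ DERIV_imp_deriv[OF time(2)] DERIV_imp_deriv[OF space(2)]
        exp_weight y0_def[symmetric]
      by (subst separated_residual_factorization[OF n0 n1 \<xi>(1) _ p]) (use y0 ode in simp_all)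
  qed
qed

end

theorem mainTheorem7:
  fixes n r c1 c2 p :: real
    and \<xi> \<xi>' \<xi>'' F G \<phi> :: "real \<Rightarrow> real"
    and X J :: "real set"
    and u :: "real \<Rightarrow> real \<Rightarrow> real"
  assumes n0: "n \<noteq> 0" and n1: "n \<noteq> -1"
    and X_open: "open X"
    and xi_nz: "\<forall>x\<in>X. \<xi> x \<noteq> 0"
    and xi_d1: "\<forall>x\<in>X. (\<xi> has_real_derivative \<xi>' x) (at x)"
    and xi_d2: "\<forall>x\<in>X. (\<xi>' has_real_derivative \<xi>'' x) (at x)"
    and F_antider: "\<forall>x\<in>X. (F has_real_derivative 1 / \<xi> x) (at x)"
    and p_def: "p = 4 * (1 + 1 / n)\<^sup>2 * r\<^sup>2"
    and J_open: "open J"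
    and phi_pos: "\<forall>w\<in>J. \<phi> w > 0"
    and phi_diff: "\<forall>w\<in>J. \<phi> differentiable (at w)"
    and denom_nz: "\<forall>w\<in>J. 2 * r * \<phi> w powr (n + 1) + c1 \<noteq> 0"
    and G_antider: "\<forall>w\<in>J. (G has_real_derivative
                        n * (\<phi> w powr n - 1) / (2 * r * \<phi> w powr (n + 1) + c1)) (at (\<phi> w))"
    and phi_implicit: "\<forall>w\<in>J. G (\<phi> w) = w + c2"
    and u_def: "u = (\<lambda>t x. \<phi> (t - F x) * \<bar>\<xi> x\<bar> powr (1 / (2 * n + 2)) * exp (r / n * F x))"
  shows "\<forall>t x. x \<in> X \<and> t - F x \<in> J \<longrightarrow>
           (\<lambda>s. u s x) differentiable (at t) \<and>
           (\<lambda>s. deriv (\<lambda>s'. u s' x) s) differentiable (at t) \<and>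
           (\<lambda>y. u t y) differentiable (at x) \<and>
           (\<lambda>y. u t y powr n * deriv (\<lambda>z. u t z) y) differentiable (at x) \<and>
           \<bar>\<xi> x\<bar> powr (- (3 * n + 4) / (2 * n + 2)) * exp (r * F x)
              * deriv (\<lambda>s. deriv (\<lambda>s'. u s' x) s) t
           - deriv (\<lambda>y. u t y powr n * deriv (\<lambda>z. u t z) y) x
           - ((\<xi>' x)\<^sup>2 - 2 * \<xi> x * \<xi>'' x - p) / (4 * (n + 1) * (\<xi> x)\<^sup>2) * u t x powr (n + 1) = 0"
proof -
  interpret separated_ansatz n r c1 c2 \<xi> \<xi>' \<xi>'' F G \<phi> X J u
    using assms by unfold_locales auto
  show ?thesis
    using separated_residual[OF _ _ p_def] by blast
qed

end
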